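(* Let $\mathcal{N}^+$ be a (metric or topological) rooted network on $X$ and let $Z\subseteq X$ with $|Z|\ge 2$. For every $x\in Z$ there is $y\in Z$ such that $\mathrm{MRCA}(\{x,y\})=\mathrm{MRCA}(Z)$.
   Context: Rooted network on $X$: connected directed acyclic graph without loops (at most two parallel edges allowed) with a root $r$ (indegree 0, outdegree 2), leaves bijectively labeled by $X$ (indegree 1, outdegree 0), tree nodes (indegree 1, outdegree 2) and hybrid nodes (indegree 2, outdegree 1). A node $v$ is above $u$ if there is a nonempty directed path from $v$ to $u$. For nonempty $Z\subseteq X$, let $D$ be the set of nodes lying on every directed path from $r$ to any $z\in Z$; $D$ is totally ordered by "above", and $\mathrm{MRCA}(Z)$ is the lowest element of $D$. *)

theory Defs
  imports Main
begin

text \<open>A directed multigraph is given by a node set V, an edge set E (edge identifiers,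
  so that parallel edges are possible) and source/target maps.\<close>

definition arcs :: "'e set \<Rightarrow> ('e \<Rightarrow> 'v) \<Rightarrow> ('e \<Rightarrow> 'v) \<Rightarrow> ('v \<times> 'v) set" where
  "arcs E src tgt = {(src e, tgt e) | e. e \<in> E}"

definition indeg :: "'e set \<Rightarrow> ('e \<Rightarrow> 'v) \<Rightarrow> 'v \<Rightarrow> nat" where
  "indeg E tgt v = card {e \<in> E. tgt e = v}"

definition outdeg :: "'e set \<Rightarrow> ('e \<Rightarrow> 'v) \<Rightarrow> 'v \<Rightarrow> nat" where
  "outdeg E src v = card {e \<in> E. src e = v}"

definition leaves :: "'v set \<Rightarrow> 'e set \<Rightarrow> ('e \<Rightarrow> 'v) \<Rightarrow> ('e \<Rightarrow> 'v) \<Rightarrow> 'v set" where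
  "leaves V E src tgt = {v \<in> V. indeg E tgt v = 1 \<and> outdeg E src v = 0}"

definition rooted_network ::
  "'v set \<Rightarrow> 'e set \<Rightarrow> ('e \<Rightarrow> 'v) \<Rightarrow> ('e \<Rightarrow> 'v) \<Rightarrow> 'v \<Rightarrow> 'x set \<Rightarrow> ('x \<Rightarrow> 'v) \<Rightarrow> bool" where
  "rooted_network V E src tgt r X lab \<longleftrightarrow>
     finite V \<and> finite E \<and>
     (\<forall>e\<in>E. src e \<in> V \<and> tgt e \<in> V) \<and>
     (\<forall>e\<in>E. src e \<noteq> tgt e) \<and>
     (\<forall>a b. card {e \<in> E. src e = a \<and> tgt e = b} \<le> 2) \<and>
     acyclic (arcs E src tgt) \<and>
     (\<forall>u\<in>V. \<forall>v\<in>V. (u, v) \<in> (arcs E src tgt \<union> (arcs E src tgt)\<inverse>)\<^sup>*) \<and>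
     r \<in> V \<and> indeg E tgt r = 0 \<and> outdeg E src r = 2 \<and>
     (\<forall>v\<in>V - {r}.
        (indeg E tgt v = 1 \<and> outdeg E src v = 0) \<or>
        (indeg E tgt v = 1 \<and> outdeg E src v = 2) \<or>
        (indeg E tgt v = 2 \<and> outdeg E src v = 1)) \<and>
     bij_betw lab X (leaves V E src tgt)"

definition dpath :: "'v set \<Rightarrow> 'e set \<Rightarrow> ('e \<Rightarrow> 'v) \<Rightarrow> ('e \<Rightarrow> 'v) \<Rightarrow> 'v list \<Rightarrow> bool" where
  "dpath V E src tgt p \<longleftrightarrow> p \<noteq> [] \<and> set p \<subseteq> V \<and>
     (\<forall>i. Suc i < length p \<longrightarrow> (p ! i, p ! Suc i) \<in> arcs E src tgt)"

definition above :: "'e set \<Rightarrow> ('e \<Rightarrow> 'v) \<Rightarrow> ('e \<Rightarrow> 'v) \<Rightarrow> 'v \<Rightarrow> 'v \<Rightarrow> bool" where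
  "above E src tgt v u \<longleftrightarrow> (v, u) \<in> (arcs E src tgt)\<^sup>+"

definition common_nodes ::
  "'v set \<Rightarrow> 'e set \<Rightarrow> ('e \<Rightarrow> 'v) \<Rightarrow> ('e \<Rightarrow> 'v) \<Rightarrow> 'v \<Rightarrow> ('x \<Rightarrow> 'v) \<Rightarrow> 'x set \<Rightarrow> 'v set" where
  "common_nodes V E src tgt r lab Z =
     {v \<in> V. \<forall>z\<in>Z. \<forall>p. dpath V E src tgt p \<and> hd p = r \<and> last p = lab z \<longrightarrow> v \<in> set p}"

definition MRCA ::
  "'v set \<Rightarrow> 'e set \<Rightarrow> ('e \<Rightarrow> 'v) \<Rightarrow> ('e \<Rightarrow> 'v) \<Rightarrow> 'v \<Rightarrow> ('x \<Rightarrow> 'v) \<Rightarrow> 'x set \<Rightarrow> 'v" where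
  "MRCA V E src tgt r lab Z =
     (THE v. v \<in> common_nodes V E src tgt r lab Z \<and>
        (\<forall>u \<in> common_nodes V E src tgt r lab Z. u \<noteq> v \<longrightarrow> above E src tgt u v))"

end

theory Submission
  imports Defs
begin

text \<open>Say that u dominates v if u lies on every root path to v, so that D(S) consists of the
  common dominators of the leaves in S. The dominators of a node all lie on one root path to it,
  so they are totally ordered by ancestry, and of two dominators of the same node the higher one
  dominates the lower. Fix x \<in> Z and suppose that no MRCA({x,y}) equals w = MRCA(Z); each of
  them then lies strictly below w. The highest of them dominates lab x together with every
  MRCA({x,z}), hence dominates every MRCA({x,z}) and through it the leaf lab z. So it belongs
  to D(Z) and lies above w, contradicting acyclicity.\<close>

lemma dpath_Cons:
  "dpath V E s t (a # p) \<longleftrightarrow> a \<in> V \<and> (p \<noteq> [] \<longrightarrow> (a, hd p) \<in> arcs E s t \<and> dpath V E s t p)"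
proof (cases p)
  case (Cons b q)
  have "(\<forall>i. Suc i < length (a # p) \<longrightarrow> ((a # p) ! i, (a # p) ! Suc i) \<in> arcs E s t) \<longleftrightarrow>
        (a, b) \<in> arcs E s t \<and> (\<forall>i. Suc i < length p \<longrightarrow> (p ! i, p ! Suc i) \<in> arcs E s t)"
  proof (intro iffI conjI allI impI)
    fix i
    assume "\<forall>i. Suc i < length (a # p) \<longrightarrow> ((a # p) ! i, (a # p) ! Suc i) \<in> arcs E s t"
      and "Suc i < length p"
    then show "(p ! i, p ! Suc i) \<in> arcs E s t" by (metis Suc_less_eq length_Cons nth_Cons_Suc)
  next
    fix i
    assume "(a, b) \<in> arcs E s t \<and> (\<forall>i. Suc i < length p \<longrightarrow> (p ! i, p ! Suc i) \<in> arcs E s t)"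
      and "Suc i < length (a # p)"
    then show "((a # p) ! i, (a # p) ! Suc i) \<in> arcs E s t"
      using Cons by (cases i) auto
  qed (use Cons in auto)
  then show ?thesis using Cons by (auto simp: dpath_def)
qed (simp add: dpath_def)

lemma dpath_append_Cons:
  "dpath V E s t (p @ v # q) \<longleftrightarrow> dpath V E s t (p @ [v]) \<and> dpath V E s t (v # q)"
proof (induction p)
  case (Cons a p)
  have "hd (p @ v # q) = hd (p @ [v])" by (cases p) auto
  then show ?case using Cons by (auto simp: dpath_Cons)
qed (auto simp: dpath_Cons)

lemma dpath_tail_below:
  "dpath V E s t (v # p) \<Longrightarrow> u \<in> set p \<Longrightarrow> (v, u) \<in> (arcs E s t)\<^sup>+"
proof (induction p arbitrary: v)
  case (Cons c p)
  then have "(v, c) \<in> arcs E s t" "dpath V E s t (c # p)" by (auto simp: dpath_Cons)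
  then show ?case using Cons by (auto intro: trancl_into_trancl2)
qed simp

lemma dpath_nodes_comparable:
  "dpath V E s t p \<Longrightarrow> a \<in> set p \<Longrightarrow> b \<in> set p \<Longrightarrow>
    a = b \<or> (a, b) \<in> (arcs E s t)\<^sup>+ \<or> (b, a) \<in> (arcs E s t)\<^sup>+"
proof (induction p)
  case (Cons c p)
  then show ?case
    using dpath_tail_below[OF Cons.prems(1)] by (cases "p = []") (auto simp: dpath_Cons)
qed simp

locale rooted_net =
  fixes V :: "'v set" and E :: "'e set" and src tgt :: "'e \<Rightarrow> 'v" and r :: 'v
    and X :: "'x set" and lab :: "'x \<Rightarrow> 'v"
  assumes net: "rooted_network V E src tgt r X lab"
begin

abbreviation A :: "('v \<times> 'v) set" where "A \<equiv> arcs E src tgt"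
abbreviation dp :: "'v list \<Rightarrow> bool" where "dp \<equiv> dpath V E src tgt"
abbreviation D :: "'x set \<Rightarrow> 'v set" where "D \<equiv> common_nodes V E src tgt r lab"
abbreviation mrca :: "'x set \<Rightarrow> 'v" where "mrca \<equiv> MRCA V E src tgt r lab"

definition dominates :: "'v \<Rightarrow> 'v \<Rightarrow> bool" where
  "dominates u v \<longleftrightarrow> (\<forall>p. dp p \<and> hd p = r \<and> last p = v \<longrightarrow> u \<in> set p)"

lemma finite_arcs: "finite A"
  using net unfolding rooted_network_def arcs_def by (auto simp: setcompr_eq_image)

lemma acyclic_arcs: "acyclic A"
  using net unfolding rooted_network_def by simp

lemma above_asym: "(a, b) \<in> A\<^sup>+ \<Longrightarrow> (b, a) \<notin> A\<^sup>+"
  using acyclic_arcs by (meson acyclic_def trancl_trans)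

lemma wf_arcs: "wf A"
  using finite_arcs acyclic_arcs by (rule finite_acyclic_wf)

lemma wf_converse_trancl_arcs: "wf ((A\<^sup>+)\<inverse>)"
  using finite_acyclic_wf_converse[OF finite_arcs acyclic_arcs] by (simp add: wf_trancl trancl_converse[symmetric])

lemma root_in_V: "r \<in> V"
  using net unfolding rooted_network_def by simp

lemma lab_in_V: "x \<in> X \<Longrightarrow> lab x \<in> V"
  using net bij_betw_apply unfolding rooted_network_def leaves_def by fastforce

lemma has_in_arc: "v \<in> V \<Longrightarrow> v \<noteq> r \<Longrightarrow> \<exists>u\<in>V. (u, v) \<in> A"
proof -
  assume "v \<in> V" "v \<noteq> r"
  then have "indeg E tgt v = 1 \<or> indeg E tgt v = 2" using net unfolding rooted_network_def by auto
  then have "indeg E tgt v \<noteq> 0" by auto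
  then have "{e \<in> E. tgt e = v} \<noteq> {}" unfolding indeg_def by (metis card.empty)
  then obtain e where "e \<in> E" "tgt e = v" by blast
  then show ?thesis using net unfolding rooted_network_def arcs_def by auto
qed

lemma root_path_exists: "v \<in> V \<Longrightarrow> \<exists>p. dp p \<and> hd p = r \<and> last p = v"
proof (induction v rule: wf_induct[OF wf_arcs])
  case (1 v)
  show ?case
  proof (cases "v = r")
    case True
    then show ?thesis using root_in_V by (intro exI[of _ "[r]"]) (simp add: dpath_def)
  next
    case False
    then obtain u where "u \<in> V" "(u, v) \<in> A" using has_in_arc 1(2) by blast
    moreover from this obtain p where p: "dp p" "hd p = r" "last p = u" using 1(1) by blast
    moreover from p obtain p' where p': "p = p' @ [u]" by (metis append_butlast_last_id dpath_def)
    ultimately have "dp (p' @ [u, v])" using 1(2) dpath_append_Cons[of V E src tgt p' u "[v]"]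
      by (simp add: dpath_Cons)
    then show ?thesis using p p' by (intro exI[of _ "p' @ [u, v]"]) (cases p', auto)
  qed
qed

lemma common_nodes_iff: "v \<in> D S \<longleftrightarrow> v \<in> V \<and> (\<forall>z\<in>S. dominates v (lab z))"
  unfolding common_nodes_def dominates_def by simp

lemma dominates_refl: "dominates v v"
  unfolding dominates_def dpath_def by (metis last_in_set)

lemma dominates_trans:
  assumes "dominates u v" "dominates v w"
  shows "dominates u w"
  unfolding dominates_def
proof (intro allI impI)
  fix p assume p: "dp p \<and> hd p = r \<and> last p = w"
  then obtain p1 p2 where p12: "p = p1 @ v # p2" using assms(2) split_list unfolding dominates_def by metis
  with p have "dp (p1 @ [v])" by (metis dpath_append_Cons)
  moreover have "hd (p1 @ [v]) = r" using p p12 by (cases p1) auto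
  ultimately
  have "u \<in> set (p1 @ [v])" using assms(1) unfolding dominates_def by (metis last_snoc)
  then show "u \<in> set p" using p12 by auto
qed

lemma dominates_comparable:
  assumes "dominates u w" "dominates u' w" "w \<in> V"
  shows "u = u' \<or> (u, u') \<in> A\<^sup>+ \<or> (u', u) \<in> A\<^sup>+"
proof -
  obtain p where p: "dp p" "hd p = r" "last p = w" using root_path_exists assms(3) by blast
  then have "u \<in> set p" "u' \<in> set p" using assms(1,2) unfolding dominates_def by blast+
  then show ?thesis by (rule dpath_nodes_comparable[OF p(1)])
qed

text \<open>Extend a root path to v by the part after v of a root path to w; u must occur on the
  result but cannot occur after v, which is below u.\<close>
lemma dominates_lower_dominator:
  assumes u: "dominates u w" and v: "dominates v w" and w: "w \<in> V" and "(u, v) \<in> A\<^sup>+"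
  shows "dominates u v"
  unfolding dominates_def
proof (intro allI impI)
  fix p assume p: "dp p \<and> hd p = r \<and> last p = v"
  obtain q where q: "dp q" "hd q = r" "last q = w" using root_path_exists w by blast
  then obtain q1 q2 where q12: "q = q1 @ v # q2" using v split_list unfolding dominates_def by metis
  from p obtain p1 where p1: "p = p1 @ [v]" by (metis append_butlast_last_id dpath_def)
  have "dp (p1 @ v # q2)" using p p1 q q12 dpath_append_Cons by metis
  moreover have "hd (p1 @ v # q2) = r" using p p1 by (cases p1) auto
  moreover have "last (p1 @ v # q2) = w" using q q12 by simp
  ultimately have "u \<in> set (p1 @ v # q2)" using u unfolding dominates_def by blast
  moreover have "u \<notin> set q2"
    using dpath_tail_below q q12 dpath_append_Cons above_asym \<open>(u, v) \<in> A\<^sup>+\<close> by metis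
  ultimately show "u \<in> set p" using p1 by auto
qed

lemma common_nodes_antimono: "S \<subseteq> T \<Longrightarrow> D T \<subseteq> D S"
  unfolding common_nodes_def by blast

lemma root_in_common_nodes: "r \<in> D S"
  unfolding common_nodes_def using root_in_V by (auto simp: dpath_def)

lemma common_nodes_comparable:
  assumes "z \<in> S" "S \<subseteq> X" "a \<in> D S" "b \<in> D S"
  shows "a = b \<or> (a, b) \<in> A\<^sup>+ \<or> (b, a) \<in> A\<^sup>+"
  using assms dominates_comparable lab_in_V common_nodes_iff by blast

lemma MRCA_lowest:
  assumes "z \<in> S" "S \<subseteq> X"
  shows "mrca S \<in> D S" and "u \<in> D S \<Longrightarrow> u \<noteq> mrca S \<Longrightarrow> (u, mrca S) \<in> A\<^sup>+"
proof -
  obtain v where v: "v \<in> D S" and min: "\<And>u. (u, v) \<in> (A\<^sup>+)\<inverse> \<Longrightarrow> u \<notin> D S"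
    using wfE_min[OF wf_converse_trancl_arcs root_in_common_nodes] by metis
  have low: "\<forall>u\<in>D S. u \<noteq> v \<longrightarrow> (u, v) \<in> A\<^sup>+"
    using common_nodes_comparable[OF assms] v min by blast
  have "mrca S = v"
    unfolding MRCA_def above_def
  proof (rule the_equality)
    fix v' assume "v' \<in> D S \<and> (\<forall>u\<in>D S. u \<noteq> v' \<longrightarrow> (u, v') \<in> A\<^sup>+)"
    then show "v' = v" using v low above_asym by metis
  qed (use v low in blast)
  then show "mrca S \<in> D S" and "u \<in> D S \<Longrightarrow> u \<noteq> mrca S \<Longrightarrow> (u, mrca S) \<in> A\<^sup>+"
    using v low by auto
qed

lemma MRCA_pair_eq:
  assumes ZX: "Z \<subseteq> X" and x: "x \<in> Z"
  shows "\<exists>y\<in>Z. mrca {x, y} = mrca Z"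
proof (rule ccontr)
  assume no_pair: "\<not> ?thesis"
  define M where "M y = mrca {x, y}" for y
  have differs: "M y \<noteq> mrca Z" if "y \<in> Z" for y
    using no_pair that unfolding M_def by auto
  have pair: "M y \<in> D {x, y}" "u \<in> D {x, y} \<Longrightarrow> u \<noteq> M y \<Longrightarrow> (u, M y) \<in> A\<^sup>+"
    if "y \<in> Z" for y u
    using MRCA_lowest[of x "{x, y}"] that x ZX unfolding M_def by auto
  have below: "(mrca Z, M y) \<in> A\<^sup>+" if y: "y \<in> Z" for y
  proof -
    have "mrca Z \<in> D {x, y}"
      using MRCA_lowest(1)[OF x ZX] common_nodes_antimono[of "{x, y}" Z] x y by blast
    then show ?thesis using pair(2)[OF y] differs[OF y] by auto
  qed
  obtain m where "m \<in> M ` Z" and m_highest: "\<And>u. (u, m) \<in> A\<^sup>+ \<Longrightarrow> u \<notin> M ` Z"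
    using wfE_min[OF wf_trancl[OF wf_arcs], of "M x" "M ` Z"] x by blast
  then obtain y0 where y0: "y0 \<in> Z" "m = M y0" by blast
  have highest: "(M y, M y0) \<notin> A\<^sup>+" if "y \<in> Z" for y
    using m_highest that y0(2) by blast
  have dom_x: "dominates (M y) (lab x)" if "y \<in> Z" for y
    using pair(1)[OF that] unfolding common_nodes_iff by simp
  have "dominates (M y0) (lab z)" if z: "z \<in> Z" for z
  proof -
    have xV: "lab x \<in> V" using lab_in_V x ZX by blast
    have "M y0 = M z \<or> (M y0, M z) \<in> A\<^sup>+"
      using dominates_comparable[OF dom_x[OF y0(1)] dom_x[OF z] xV] highest[OF z] by blast
    then have "dominates (M y0) (M z)"
      using dominates_lower_dominator[OF dom_x[OF y0(1)] dom_x[OF z] xV] dominates_refl by metis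
    moreover have "dominates (M z) (lab z)" using pair(1)[OF z] unfolding common_nodes_iff by simp
    ultimately show ?thesis by (rule dominates_trans)
  qed
  then have "M y0 \<in> D Z" using pair(1)[OF y0(1)] unfolding common_nodes_iff by simp
  then have "(M y0, mrca Z) \<in> A\<^sup>+" using MRCA_lowest(2)[OF x ZX] differs[OF y0(1)] by blast
  then show False using below[OF y0(1)] above_asym by blast
qed

end

theorem mainTheorem5:
  fixes V :: "'v set" and E :: "'e set" and src tgt :: "'e \<Rightarrow> 'v" and r :: 'v
    and X :: "'x set" and lab :: "'x \<Rightarrow> 'v" and Z :: "'x set"
  assumes "rooted_network V E src tgt r X lab"
    and "Z \<subseteq> X" and "card Z \<ge> 2"
  shows "\<forall>x\<in>Z. \<exists>y\<in>Z. MRCA V E src tgt r lab {x, y} = MRCA V E src tgt r lab Z"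
proof -
  interpret rooted_net V E src tgt r X lab using assms(1) by unfold_locales
  show ?thesis using MRCA_pair_eq assms(2) by blast
qed

end
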